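(* Let $x\in\mathbb{R}^{w\times h}$ be a sample with true label $y_0$, let $\mathbb{P}$ be a set of patch regions, let $\mathbb{M}_{\mathbb{P}}$ be a covering mask set for $\mathbb{P}$, and let $\tau\in[0,1]$. Suppose $$\max\{f_{\mathrm{conf}}(x_{\mathrm{M}}) : \mathrm{M}\in\mathbb{M}_{\mathbb{P}},\ f(x_{\mathrm{M}})\neq y_0\}<\tau .$$ Then for every $x'\in\mathbb{A}_{\mathbb{P}}(x)$ with $f(x')\neq y_0$, at least one of the following holds: (i) $\{x'_{\mathrm{M}} : \mathrm{M}\in\mathbb{M}_{\mathbb{P}},\ f(x'_{\mathrm{M}})\neq f(x')\}\neq\emptyset$; (ii) $\min\{f_{\mathrm{conf}}(x'_{\mathrm{M}}) : \mathrm{M}\in\mathbb{M}_{\mathbb{P}},\ f(x'_{\mathrm{M}})= f(x')\}<\tau$. Equivalently, in terms of the HiCert functions $v,w$ defined in the context: $v(x)$ implies that $w(x')$ holds for every $x'\in\mathbb{A}_{\mathbb{P}}(x)$ with $f(x')\neq y_0$.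
   Context: Samples are real matrices in $\mathbb{R}^{w\times h}$; $J$ is the all-ones matrix, and $+,-,\odot$ are entrywise. A classifier is a function $f:\mathbb{R}^{w\times h}\to\mathcal{Y}$ ($\mathcal{Y}$ a finite label set) together with a confidence function $f_{\mathrm{conf}}:\mathbb{R}^{w\times h}\to(0,1)$. A patch region is $\mathrm{P}\in\{0,1\}^{w\times h}$; $\mathbb{P}$ is a set of patch regions. The attack constraint set of $x$ is $\mathbb{A}_{\mathbb{P}}(x)=\{x'' : \exists\,\mathrm{P}\in\mathbb{P},\ x''=(J-\mathrm{P})\odot x+\mathrm{P}\odot x''\}$. A mask is $\mathrm{M}\in\{0,1\}^{w\times h}$, and the mutant of $\hat x$ for $\mathrm{M}$ is $\hat x_{\mathrm{M}}=(J-\mathrm{M})\odot\hat x$. A covering mask set for $\mathbb{P}$ is a finite set of masks $\mathbb{M}_{\mathbb{P}}$ such that for every $\mathrm{P}\in\mathbb{P}$ there is $\mathrm{M}\in\mathbb{M}_{\mathbb{P}}$ with $\mathrm{P}\odot\mathrm{M}=\mathrm{P}$. Conventions: $\max\emptyset=-\infty$, $\min\emptyset=+\infty$. HiCert's certification function is $v(x):=[\max\{f_{\mathrm{conf}}(x_{\mathrm{M}}):\mathrm{M}\in\mathbb{M}_{\mathbb{P}}, f(x_{\mathrm{M}})\neq y_0\}<\tau]$ (with $y_0$ the true label of $x$), and its warning function is $w(\hat x):=[\{\hat x_{\mathrm{M}}:\mathrm{M}\in\mathbb{M}_{\mathbb{P}}, f(\hat x_{\mathrm{M}})\neq f(\hat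 x)\}\neq\emptyset]\lor[\min\{f_{\mathrm{conf}}(\hat x_{\mathrm{M}}):\mathrm{M}\in\mathbb{M}_{\mathbb{P}}, f(\hat x_{\mathrm{M}})=f(\hat x)\}<\tau]$. *)

theory Defs
  imports "HOL-Analysis.Analysis"
begin

text \<open>Samples: real w x h matrices, rendered as real ^ 'h ^ 'w with finite index types.
  Masks and patch regions are real matrices with entries in {0,1}.\<close>

type_synonym ('w,'h) sample = "real ^ 'h ^ 'w"

definition ones :: "('w::finite,'h::finite) sample" ("J") where
  "ones = (\<chi> i j. 1)"

definition hadamard :: "('w::finite,'h::finite) sample \<Rightarrow> ('w,'h) sample \<Rightarrow> ('w,'h) sample"
  (infixl "\<odot>" 70) where
  "A \<odot> B = (\<chi> i j. (A $ i $ j) * (B $ i $ j))"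

definition binary :: "('w::finite,'h::finite) sample \<Rightarrow> bool" where
  "binary P \<longleftrightarrow> (\<forall>i j. P $ i $ j = 0 \<or> P $ i $ j = 1)"

definition attack_set :: "('w::finite,'h::finite) sample set \<Rightarrow> ('w,'h) sample \<Rightarrow> ('w,'h) sample set" where
  "attack_set PP x = {x''. \<exists>P\<in>PP. x'' = (J - P) \<odot> x + P \<odot> x''}"

definition mutant :: "('w::finite,'h::finite) sample \<Rightarrow> ('w,'h) sample \<Rightarrow> ('w,'h) sample" where
  "mutant x M = (J - M) \<odot> x"

definition covering_mask_set :: "('w::finite,'h::finite) sample set \<Rightarrow> ('w,'h) sample set \<Rightarrow> bool" where
  "covering_mask_set PP MM \<longleftrightarrow> finite MM \<and> (\<forall>M\<in>MM. binary M) \<and>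
     (\<forall>P\<in>PP. \<exists>M\<in>MM. P \<odot> M = P)"

text \<open>max / min of a set of reals with conventions max {} = -\<infinity>, min {} = +\<infinity>.\<close>
definition emax :: "real set \<Rightarrow> ereal" where "emax S = Sup (ereal ` S)"
definition emin :: "real set \<Rightarrow> ereal" where "emin S = Inf (ereal ` S)"

end

theory Submission
  imports Defs
begin

text \<open>A mask covering the patch of an attack hides every pixel the attacker changed, so the
  attacked and the clean sample have the same mutant for that mask. If the classifier's label on
  this mutant differs from its label on the attacked sample, the warning fires through the first
  disjunct. Otherwise the clean mutant is misclassified, so certification bounds its confidence
  by \<open>\<tau>\<close>; being also a consistent mutant of the attacked sample, it pushes the minimum in the
  second disjunct below \<open>\<tau>\<close>.\<close>

lemma emax_upper: "a \<in> S \<Longrightarrow> ereal a \<le> emax S"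
  unfolding emax_def by (intro Sup_upper) simp

lemma emin_lower: "a \<in> S \<Longrightarrow> emin S \<le> ereal a"
  unfolding emin_def by (intro Inf_lower) simp

lemma masked_patch_entry_eq:
  fixes p m x x' :: real
  assumes patch: "x' = (1 - p) * x + p * x'" and covered: "p * m = p"
  shows "(1 - m) * x' = (1 - m) * x"
proof (cases "p = 1")
  case True
  with covered show ?thesis by simp
next
  case False
  from patch have "(1 - p) * (x' - x) = 0" by (simp add: algebra_simps)
  with False show ?thesis by simp
qed

lemma mutant_eq_if_patch_covered:
  fixes x x' P M :: "('w::finite,'h::finite) sample"
  assumes patch: "x' = (J - P) \<odot> x + P \<odot> x'" and covered: "P \<odot> M = P"
  shows "mutant x' M = mutant x M"
proof -
  have "(1 - M $ i $ j) * x' $ i $ j = (1 - M $ i $ j) * x $ i $ j" for i j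
  proof (rule masked_patch_entry_eq)
    show "x' $ i $ j = (1 - P $ i $ j) * x $ i $ j + P $ i $ j * x' $ i $ j"
      using arg_cong[OF patch, of "\<lambda>z. z $ i $ j"] by (simp add: hadamard_def ones_def)
    show "P $ i $ j * M $ i $ j = P $ i $ j"
      using arg_cong[OF covered, of "\<lambda>z. z $ i $ j"] by (simp add: hadamard_def)
  qed
  then show ?thesis by (simp add: mutant_def hadamard_def ones_def vec_eq_iff)
qed

lemma covering_mask_set_mutant_eq:
  assumes "covering_mask_set PP MM" and "x' \<in> attack_set PP x"
  obtains M where "M \<in> MM" and "mutant x' M = mutant x M"
proof -
  from assms(2) obtain P where "P \<in> PP" and patch: "x' = (J - P) \<odot> x + P \<odot> x'"
    by (auto simp: attack_set_def)
  with assms(1) obtain M where "M \<in> MM" and "P \<odot> M = P"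
    by (auto simp: covering_mask_set_def)
  with patch show ?thesis
    using mutant_eq_if_patch_covered that by blast
qed

theorem theorem2:
  fixes f :: "('w::finite,'h::finite) sample \<Rightarrow> 'y::finite"
    and fconf :: "('w,'h) sample \<Rightarrow> real"
    and x :: "('w,'h) sample" and y0 :: 'y
    and PP MM :: "('w,'h) sample set" and \<tau> :: real
  assumes conf_range: "\<forall>z. 0 < fconf z \<and> fconf z < 1"
    and PP_binary: "\<forall>P\<in>PP. binary P"
    and cover: "covering_mask_set PP MM"
    and tau: "0 \<le> \<tau>" "\<tau> \<le> 1"
    and cert: "emax {fconf (mutant x M) | M. M \<in> MM \<and> f (mutant x M) \<noteq> y0} < ereal \<tau>"
  shows "\<forall>x'\<in>attack_set PP x. f x' \<noteq> y0 \<longrightarrow>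
           ({mutant x' M | M. M \<in> MM \<and> f (mutant x' M) \<noteq> f x'} \<noteq> {} \<or>
            emin {fconf (mutant x' M) | M. M \<in> MM \<and> f (mutant x' M) = f x'} < ereal \<tau>)"
proof (intro ballI impI)
  fix x' assume attack: "x' \<in> attack_set PP x" and attacked: "f x' \<noteq> y0"
  from cover attack obtain M where M: "M \<in> MM" and same_mutant: "mutant x' M = mutant x M"
    by (rule covering_mask_set_mutant_eq)
  show "{mutant x' M | M. M \<in> MM \<and> f (mutant x' M) \<noteq> f x'} \<noteq> {} \<or>
        emin {fconf (mutant x' M) | M. M \<in> MM \<and> f (mutant x' M) = f x'} < ereal \<tau>"
  proof (cases "f (mutant x' M) = f x'")
    case False
    with M show ?thesis by blast
  next
    case True
    from M True have
      "emin {fconf (mutant x' M) | M. M \<in> MM \<and> f (mutant x' M) = f x'} \<le> ereal (fconf (mutant x' M))"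
      by (intro emin_lower) auto
    also have "\<dots> = ereal (fconf (mutant x M))"
      using same_mutant by simp
    also from M True same_mutant attacked have
      "\<dots> \<le> emax {fconf (mutant x M) | M. M \<in> MM \<and> f (mutant x M) \<noteq> y0}"
      by (intro emax_upper) auto
    also note cert
    finally show ?thesis by (rule disjI2)
  qed
qed

end
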